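(* For every $n\ge 2$, $$N(n)=\left(\sum_{i=0}^{n-1}\frac{(n-1)!}{i!}\right)N(n-1),$$ where $N(1)=1$.
   Context: A semi-Heyting algebra is an algebra $\langle L,\vee,\wedge,\to,0,1\rangle$ such that: (SH1) $\langle L,\vee,\wedge,0,1\rangle$ is a bounded lattice with least element $0$ and greatest element $1$; (SH2) $x\wedge(x\to y)=x\wedge y$; (SH3) $x\wedge(y\to z)=x\wedge[(x\wedge y)\to(x\wedge z)]$; (SH4) $x\to x=1$, for all $x,y,z\in L$. For $n\ge 1$, $C_n$ denotes the chain $a_0<a_1<\cdots<a_{n-1}$ with $0=a_0$, $1=a_{n-1}$ (for $n=1$, $0=1$), with $\wedge=\min$, $\vee=\max$. $N(n)$ denotes the number of binary operations $\to$ on $C_n$ such that $\langle C_n,\vee,\wedge,\to,0,1\rangle$ is a semi-Heyting algebra. *)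

theory Defs
  imports "HOL-Library.FuncSet" Complex_Main
begin

text \<open>The chain C_n is modelled by the carrier {0..<n} of naturals, with
  element a_i represented by i; meet is min, join is max, 0 = 0 and 1 = n - 1.
  A binary operation on C_n is an extensional (curried) function
  {0..<n} -> {0..<n} -> {0..<n}.  Axiom SH1 holds automatically for the chain.\<close>

definition is_semiHeyting_chain_op :: "nat \<Rightarrow> (nat \<Rightarrow> nat \<Rightarrow> nat) \<Rightarrow> bool" where
  "is_semiHeyting_chain_op n imp \<longleftrightarrow>
     imp \<in> {0..<n} \<rightarrow>\<^sub>E ({0..<n} \<rightarrow>\<^sub>E {0..<n}) \<and>
     (\<forall>x\<in>{0..<n}. \<forall>y\<in>{0..<n}. min x (imp x y) = min x y) \<and>
     (\<forall>x\<in>{0..<n}. \<forall>y\<in>{0..<n}. \<forall>z\<in>{0..<n}.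
        min x (imp y z) = min x (imp (min x y) (min x z))) \<and>
     (\<forall>x\<in>{0..<n}. imp x x = n - 1)"

definition N_SH :: "nat \<Rightarrow> nat" where
  "N_SH n = card {imp. is_semiHeyting_chain_op n imp}"

end

theory Submission
  imports Defs
begin

text \<open>SH2 forces y \<rightarrow> z = z for z < y, and SH4 forces y \<rightarrow> y = 1, so an operation on the
  chain is determined by its entries above the diagonal.  Given these, SH3 says exactly that each
  row separately satisfies y \<le> y \<rightarrow> z and min x (y \<rightarrow> z) = min x (y \<rightarrow> x) for y < x < z.
  Such a row tail over an interval of length m is either constantly y, or consists of its value at
  y + 1 (one of m values above y) and a row tail over an interval of length m - 1.  Hence there
  are a(m) of them, where a(0) = 1 and a(m) = 1 + m a(m - 1), i.e. a(m) = \<Sum>i\<le>m. m!/i!, the number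
  of arrangements of an m-set; and N(n) = a(0) a(1) \<cdots> a(n - 1).\<close>

definition sh_row_tails :: "nat \<Rightarrow> nat \<Rightarrow> (nat \<Rightarrow> nat) set" where
  "sh_row_tails y t = {g \<in> {y<..t} \<rightarrow>\<^sub>E {y..t}.
     \<forall>x z. y < x \<longrightarrow> x < z \<longrightarrow> z \<le> t \<longrightarrow> min x (g z) = min x (g x)}"

fun arrangements :: "nat \<Rightarrow> nat" where
  "arrangements 0 = 1"
| "arrangements (Suc m) = 1 + Suc m * arrangements m"

lemma of_nat_arrangements:
  "of_nat (arrangements m) = (\<Sum>i=0..m. fact m / fact i :: 'a :: field_char_0)"
proof (induction m)
  case (Suc m)
  have "of_nat (arrangements (Suc m)) = of_nat (Suc m) * of_nat (arrangements m) + (1 :: 'a)"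
    by (simp add: algebra_simps)
  also have "\<dots> = of_nat (Suc m) * (\<Sum>i=0..m. fact m / fact i) + 1"
    using Suc.IH by simp
  also have "\<dots> = (\<Sum>i=0..m. fact (Suc m) / fact i) + 1"
    by (simp add: sum_distrib_left del: of_nat_Suc)
  also have "\<dots> = (\<Sum>i=0..Suc m. fact (Suc m) / fact i)"
    by (simp del: fact_Suc)
  finally show ?case .
qed simp

lemma finite_sh_row_tails: "finite (sh_row_tails y t)"
  unfolding sh_row_tails_def
  by (rule finite_subset[of _ "{y<..t} \<rightarrow>\<^sub>E {y..t}"]) (auto intro: finite_PiE)

lemma sh_row_tails_empty_interval: "sh_row_tails t t = {\<lambda>_. undefined}"
  unfolding sh_row_tails_def by auto

lemma const_in_sh_row_tails: "(\<lambda>z\<in>{y<..t}. y) \<in> sh_row_tails y t"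
  unfolding sh_row_tails_def by auto

lemma fun_upd_in_sh_row_tails:
  assumes v: "v \<in> {Suc y..t}" and h: "h \<in> sh_row_tails (Suc y) t"
  shows "h(Suc y := v) \<in> sh_row_tails y t"
proof -
  have hE: "h \<in> {Suc y<..t} \<rightarrow>\<^sub>E {Suc y..t}"
    and hC: "\<And>x z. Suc y < x \<Longrightarrow> x < z \<Longrightarrow> z \<le> t \<Longrightarrow> min x (h z) = min x (h x)"
    using h unfolding sh_row_tails_def by auto
  have "h(Suc y := v) \<in> {y<..t} \<rightarrow>\<^sub>E {y..t}"
  proof (rule PiE_I)
    show "(h(Suc y := v)) z \<in> {y..t}" if "z \<in> {y<..t}" for z
    proof (cases "z = Suc y")
      case False
      then have "z \<in> {Suc y<..t}" using that by auto
      then show ?thesis using PiE_mem[OF hE] False by fastforce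
    qed (use v in auto)
    show "(h(Suc y := v)) z = undefined" if "z \<notin> {y<..t}" for z
      using hE v that by (auto simp: PiE_def extensional_def)
  qed
  moreover have "min x ((h(Suc y := v)) z) = min x ((h(Suc y := v)) x)"
    if "y < x" "x < z" "z \<le> t" for x z
  proof (cases "x = Suc y")
    case True
    then have "h z \<in> {Suc y..t}" using hE that by auto
    then show ?thesis using True v that by (auto simp: min_def)
  qed (use hC that in auto)
  ultimately show ?thesis unfolding sh_row_tails_def by blast
qed

text \<open>Taking x = y + 1 in the compatibility condition: if g (y + 1) > y, then every
  later value exceeds y as well, while if g (y + 1) = y then all later values are y.\<close>

lemma sh_row_tails_cases:
  assumes g: "g \<in> sh_row_tails y t" and yt: "y < t"
  obtains "g = (\<lambda>z\<in>{y<..t}. y)"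
  | "g (Suc y) \<in> {Suc y..t}" "restrict g {Suc y<..t} \<in> sh_row_tails (Suc y) t"
    "g = (restrict g {Suc y<..t})(Suc y := g (Suc y))"
proof -
  have gE: "g \<in> {y<..t} \<rightarrow>\<^sub>E {y..t}"
    and gC: "\<And>x z. y < x \<Longrightarrow> x < z \<Longrightarrow> z \<le> t \<Longrightarrow> min x (g z) = min x (g x)"
    using g unfolding sh_row_tails_def by auto
  have first: "g (Suc y) \<in> {y..t}" using gE yt by auto
  have later: "min (Suc y) (g z) = min (Suc y) (g (Suc y))" if "z \<in> {Suc y<..t}" for z
    using gC[of "Suc y" z] that by auto
  show thesis
  proof (cases "g (Suc y) = y")
    case True
    have "g z = y" if "z \<in> {y<..t}" for z
      using later[of z] True that by (cases "z = Suc y") (auto simp: min_def split: if_splits)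
    then have "g = (\<lambda>z\<in>{y<..t}. y)"
      using gE by (auto simp: PiE_iff extensional_def)
    then show thesis by (rule that(1))
  next
    case False
    let ?h = "restrict g {Suc y<..t}"
    have "?h \<in> {Suc y<..t} \<rightarrow>\<^sub>E {Suc y..t}"
      using later False first gE by (fastforce simp: min_def split: if_splits)
    then have "?h \<in> sh_row_tails (Suc y) t"
      using gC unfolding sh_row_tails_def by auto
    moreover have "g = ?h(Suc y := g (Suc y))"
      using gE yt by (auto simp: PiE_iff extensional_def)
    ultimately show thesis using that(2) first False by auto
  qed
qed

lemma sh_row_tails_step:
  assumes "y < t"
  shows "sh_row_tails y t =
    insert (\<lambda>z\<in>{y<..t}. y) ((\<lambda>(v, h). h(Suc y := v)) ` ({Suc y..t} \<times> sh_row_tails (Suc y) t))"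
    (is "_ = ?R")
proof
  show "sh_row_tails y t \<subseteq> ?R"
  proof
    fix g assume "g \<in> sh_row_tails y t"
    then show "g \<in> ?R" using assms
    proof (cases rule: sh_row_tails_cases)
      case 2
      then show ?thesis
        by (intro insertI2 image_eqI[of _ _ "(g (Suc y), restrict g {Suc y<..t})"]) auto
    qed simp
  qed
  show "?R \<subseteq> sh_row_tails y t"
    using const_in_sh_row_tails fun_upd_in_sh_row_tails by auto
qed

lemma sh_row_tails_undefined: "h \<in> sh_row_tails y t \<Longrightarrow> h y = undefined"
  unfolding sh_row_tails_def by (auto simp: PiE_def extensional_def)

lemma card_sh_row_tails: "y \<le> t \<Longrightarrow> card (sh_row_tails y t) = arrangements (t - y)"
proof (induction "t - y" arbitrary: y)
  case 0
  then show ?case by (simp add: sh_row_tails_empty_interval)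
next
  case (Suc m)
  then have yt: "y < t" and m: "m = t - Suc y" by auto
  let ?ext = "\<lambda>(v, h). h(Suc y := v)"
  let ?P = "{Suc y..t} \<times> sh_row_tails (Suc y) t"
  have "inj_on ?ext ?P"
  proof (rule inj_onI, clarsimp)
    fix v h v' h'
    assume h: "h \<in> sh_row_tails (Suc y) t" and h': "h' \<in> sh_row_tails (Suc y) t"
      and eq: "h(Suc y := v) = h'(Suc y := v')"
    have "v = v'"
      using fun_cong[OF eq, of "Suc y"] by simp
    moreover have "h = (h(Suc y := v))(Suc y := undefined)" "h' = (h'(Suc y := v'))(Suc y := undefined)"
      using sh_row_tails_undefined[OF h] sh_row_tails_undefined[OF h'] by (simp_all add: fun_upd_idem)
    ultimately show "v = v' \<and> h = h'"
      using eq by metis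
  qed
  moreover have "(\<lambda>z\<in>{y<..t}. y) \<notin> ?ext ` ?P"
    using yt by (auto dest!: fun_cong[where x = "Suc y"])
  ultimately have "card (sh_row_tails y t) = Suc (card ?P)"
    using sh_row_tails_step[OF yt] by (simp add: card_image finite_sh_row_tails)
  also have "\<dots> = Suc ((t - y) * arrangements m)"
    using Suc.hyps(1)[of "Suc y"] m yt by (simp add: card_cartesian_product)
  finally show ?case
    by (simp flip: Suc.hyps(2))
qed

lemma is_semiHeyting_chain_opD:
  assumes "is_semiHeyting_chain_op n imp"
  shows is_semiHeyting_chain_op_PiE: "imp \<in> {0..<n} \<rightarrow>\<^sub>E ({0..<n} \<rightarrow>\<^sub>E {0..<n})"
    and is_semiHeyting_chain_op_SH2: "x < n \<Longrightarrow> y < n \<Longrightarrow> min x (imp x y) = min x y"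
    and is_semiHeyting_chain_op_SH3:
      "x < n \<Longrightarrow> y < n \<Longrightarrow> z < n \<Longrightarrow> min x (imp y z) = min x (imp (min x y) (min x z))"
    and is_semiHeyting_chain_op_SH4: "x < n \<Longrightarrow> imp x x = n - 1"
proof -
  note sh = assms[unfolded is_semiHeyting_chain_op_def]
  show "imp \<in> {0..<n} \<rightarrow>\<^sub>E ({0..<n} \<rightarrow>\<^sub>E {0..<n})"
    using sh by (rule conjunct1)
  show "min x (imp x y) = min x y" if "x < n" "y < n"
    using sh that by simp
  show "min x (imp y z) = min x (imp (min x y) (min x z))" if "x < n" "y < n" "z < n"
  proof -
    have "x \<in> {0..<n}" "y \<in> {0..<n}" "z \<in> {0..<n}"
      using that by auto
    then show ?thesis
      using sh[THEN conjunct2, THEN conjunct2, THEN conjunct1] by blast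
  qed
  show "imp x x = n - 1" if "x < n"
    using sh that by simp
qed

definition chain_imp :: "nat \<Rightarrow> (nat \<Rightarrow> nat \<Rightarrow> nat) \<Rightarrow> nat \<Rightarrow> nat \<Rightarrow> nat" where
  "chain_imp n G = (\<lambda>y\<in>{0..<n}. \<lambda>z\<in>{0..<n}. if z < y then z else if z = y then n - 1 else G y z)"

lemma chain_imp_apply:
  "y < n \<Longrightarrow> z < n \<Longrightarrow> chain_imp n G y z = (if z < y then z else if z = y then n - 1 else G y z)"
  by (simp add: chain_imp_def)

lemma semiHeyting_chain_op_eq_chain_imp:
  assumes imp: "is_semiHeyting_chain_op n imp"
  shows "imp = chain_imp n (\<lambda>y\<in>{0..<n}. restrict (imp y) {y<..n - 1})"
    (is "_ = chain_imp n ?G")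
proof
  fix y
  have PiE: "imp \<in> {0..<n} \<rightarrow>\<^sub>E ({0..<n} \<rightarrow>\<^sub>E {0..<n})"
    by (rule is_semiHeyting_chain_op_PiE[OF imp])
  show "imp y = chain_imp n ?G y"
  proof (cases "y < n")
    case y: True
    show ?thesis
    proof
      fix z
      have below: "imp y z = z" if "z < y"
        using is_semiHeyting_chain_op_SH2[OF imp, of y z] y that by (simp add: min_def split: if_splits)
      have "imp y z = chain_imp n ?G y z" if "z < n"
        using below is_semiHeyting_chain_op_SH4[OF imp, of y] y that by (auto simp: chain_imp_apply)
      moreover have "imp y z = chain_imp n ?G y z" if "\<not> z < n"
        using PiE_arb[OF PiE_mem[OF PiE, of y]] y that by (simp add: chain_imp_def)
      ultimately show "imp y z = chain_imp n ?G y z" by blast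
    qed
  next
    case False
    then show ?thesis
      using PiE_arb[OF PiE, of y] by (simp add: chain_imp_def)
  qed
qed

lemma semiHeyting_chain_op_row_tail:
  assumes imp: "is_semiHeyting_chain_op n imp" and y: "y < n"
  shows "restrict (imp y) {y<..n - 1} \<in> sh_row_tails y (n - 1)"
proof -
  have "imp y z \<in> {y..n - 1}" if "y < z" "z < n" for z
  proof -
    have "imp y z < n"
      using PiE_mem[OF PiE_mem[OF is_semiHeyting_chain_op_PiE[OF imp]]] y that by auto
    moreover have "y \<le> imp y z"
      using is_semiHeyting_chain_op_SH2[OF imp, of y z] y that by (simp add: min_def split: if_splits)
    ultimately show ?thesis by simp
  qed
  moreover have "min x (imp y z) = min x (imp y x)" if "y < x" "x < z" "z < n" for x z
    using is_semiHeyting_chain_op_SH3[OF imp, of x y z] that by (simp add: min_def)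
  ultimately show ?thesis
    unfolding sh_row_tails_def by auto
qed

lemma chain_imp_SH3:
  assumes G_range: "\<And>y z. y < z \<Longrightarrow> z < n \<Longrightarrow> y \<le> G y z \<and> G y z < n"
    and G_compat: "\<And>x y z. y < x \<Longrightarrow> x < z \<Longrightarrow> z < n \<Longrightarrow> min x (G y z) = min x (G y x)"
    and xyz: "x < n" "y < n" "z < n"
  shows "min x (chain_imp n G y z) = min x (chain_imp n G (min x y) (min x z))"
proof -
  let ?M = "chain_imp n G"
  have M_ge: "min u v \<le> ?M u v" if "u < n" "v < n" for u v
    using G_range[of u v] that by (auto simp: chain_imp_apply)
  consider "y \<le> x" "z \<le> x" | "y \<le> x" "x < z" | "x < y" "z \<le> x" | "x < y" "x < z"
    by linarith
  then show ?thesis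
  proof cases
    case 1
    then show ?thesis by (simp add: min_absorb2)
  next
    case 2
    then show ?thesis
      using xyz G_range[of y z] G_compat[of y x z] by (cases "y = x") (auto simp: chain_imp_apply min_def)
  next
    case 3
    then show ?thesis
      using xyz by (cases "z = x") (auto simp: chain_imp_apply min_def)
  next
    case 4
    then have "x < ?M y z"
      using xyz M_ge[of y z] by simp
    moreover have "?M (min x y) (min x z) = n - 1"
      using 4 xyz by (simp add: chain_imp_apply)
    ultimately show ?thesis
      using xyz by simp
  qed
qed

lemma chain_imp_is_semiHeyting_chain_op:
  assumes G: "G \<in> (\<Pi>\<^sub>E y\<in>{0..<n}. sh_row_tails y (n - 1))"
  shows "is_semiHeyting_chain_op n (chain_imp n G)"
proof -
  have row: "G y \<in> sh_row_tails y (n - 1)" if "y < n" for y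
    using G that by auto
  have G_range: "y \<le> G y z \<and> G y z < n" if "y < z" "z < n" for y z
  proof -
    have "z \<in> {y<..n - 1}" using that by auto
    then have "G y z \<in> {y..n - 1}"
      using row[of y] that by (auto simp: sh_row_tails_def)
    then show ?thesis using that by auto
  qed
  have G_compat: "min x (G y z) = min x (G y x)" if "y < x" "x < z" "z < n" for x y z
    using row[of y] that by (auto simp: sh_row_tails_def)
  show ?thesis
    unfolding is_semiHeyting_chain_op_def
  proof (intro conjI ballI)
    show "chain_imp n G \<in> {0..<n} \<rightarrow>\<^sub>E ({0..<n} \<rightarrow>\<^sub>E {0..<n})"
      using G_range by (auto simp: chain_imp_def)
    show "min x (chain_imp n G x y) = min x y" if "x \<in> {0..<n}" "y \<in> {0..<n}" for x y
      using that G_range[of x y] by (auto simp: chain_imp_apply min_def)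
    show "min x (chain_imp n G y z) = min x (chain_imp n G (min x y) (min x z))"
      if "x \<in> {0..<n}" "y \<in> {0..<n}" "z \<in> {0..<n}" for x y z
      using that by (intro chain_imp_SH3[OF G_range G_compat]) auto
    show "chain_imp n G x x = n - 1" if "x \<in> {0..<n}" for x
      using that by (simp add: chain_imp_apply)
  qed
qed

lemma inj_on_chain_imp: "inj_on (chain_imp n) (\<Pi>\<^sub>E y\<in>{0..<n}. sh_row_tails y (n - 1))"
proof (rule inj_onI)
  fix G H
  assume G: "G \<in> (\<Pi>\<^sub>E y\<in>{0..<n}. sh_row_tails y (n - 1))"
    and H: "H \<in> (\<Pi>\<^sub>E y\<in>{0..<n}. sh_row_tails y (n - 1))"
    and eq: "chain_imp n G = chain_imp n H"
  show "G = H"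
  proof (rule PiE_ext[OF G H])
    fix y assume y: "y \<in> {0..<n}"
    have rows: "G y \<in> {y<..n - 1} \<rightarrow>\<^sub>E {y..n - 1}" "H y \<in> {y<..n - 1} \<rightarrow>\<^sub>E {y..n - 1}"
      using G H y by (auto simp: sh_row_tails_def)
    show "G y = H y"
    proof (rule PiE_ext[OF rows])
      fix z assume "z \<in> {y<..n - 1}"
      then show "G y z = H y z"
        using fun_cong[OF fun_cong[OF eq, of y], of z] y by (auto simp: chain_imp_apply)
    qed
  qed
qed

lemma semiHeyting_chain_ops_eq_image:
  "{imp. is_semiHeyting_chain_op n imp} = chain_imp n ` (\<Pi>\<^sub>E y\<in>{0..<n}. sh_row_tails y (n - 1))"
proof (intro equalityI subsetI)
  fix imp assume "imp \<in> {imp. is_semiHeyting_chain_op n imp}"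
  then have imp: "is_semiHeyting_chain_op n imp" by simp
  show "imp \<in> chain_imp n ` (\<Pi>\<^sub>E y\<in>{0..<n}. sh_row_tails y (n - 1))"
    using semiHeyting_chain_op_eq_chain_imp[OF imp] semiHeyting_chain_op_row_tail[OF imp]
    by (intro image_eqI) auto
qed (use chain_imp_is_semiHeyting_chain_op in blast)

lemma N_SH_eq_prod_arrangements: "N_SH n = (\<Prod>k<n. arrangements k)"
proof -
  have "N_SH n = card (\<Pi>\<^sub>E y\<in>{0..<n}. sh_row_tails y (n - 1))"
    unfolding N_SH_def semiHeyting_chain_ops_eq_image by (rule card_image[OF inj_on_chain_imp])
  also have "\<dots> = (\<Prod>y<n. arrangements (n - Suc y))"
    by (simp add: card_PiE atLeast0LessThan card_sh_row_tails)
  also have "\<dots> = (\<Prod>k<n. arrangements k)"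
    by (rule prod.nat_diff_reindex)
  finally show ?thesis .
qed

theorem mainTheorem3:
  shows "N_SH 1 = 1 \<and>
    (\<forall>n::nat. n \<ge> 2 \<longrightarrow>
       real (N_SH n) = (\<Sum>i=0..n-1. fact (n-1) / fact i) * real (N_SH (n-1)))"
proof (intro conjI allI impI)
  show "N_SH 1 = 1"
    by (simp add: N_SH_eq_prod_arrangements)
  fix n :: nat
  assume "n \<ge> 2"
  then obtain m where n: "n = Suc m" by (cases n) auto
  have "N_SH n = arrangements m * N_SH m"
    by (simp add: N_SH_eq_prod_arrangements n)
  then show "real (N_SH n) = (\<Sum>i=0..n-1. fact (n-1) / fact i) * real (N_SH (n-1))"
    by (simp add: n of_nat_arrangements)
qed

end
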